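(* No natural number occurs three or more times in the sequence $(a(n))_{n\ge 0}$; that is, there do not exist $x<y<z$ in $\mathbb{N}$ with $a(x)=a(y)=a(z)$.
   Context: $\mathbb{N}=\{0,1,2,\ldots\}$. Let $(F_n)_{n\ge 0}$ be the Fibonacci numbers: $F_0=0$, $F_1=1$, $F_n=F_{n-1}+F_{n-2}$ for $n\ge 2$. Define $(a(n))_{n\ge 0}$ (OEIS A105774) by $a(0)=0$, $a(1)=1$, and for $n\ge 2$, $a(n)=F_{j+1}-a(n-F_j)$, where $j\ge 2$ is the unique index with $F_j<n\le F_{j+1}$. *)

theory Defs
  imports "HOL-Number_Theory.Fib"
begin

text \<open>The index j >= 2 with F_j < n <= F_(j+1), for n >= 2 (unique since fib is
strictly increasing from index 2).\<close>
definition fidx :: "nat \<Rightarrow> nat" where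
  "fidx n = (THE j. 2 \<le> j \<and> fib j < n \<and> n \<le> fib (Suc j))"

text \<open>OEIS A105774: a(0)=0, a(1)=1, a(n) = F_(j+1) - a(n - F_j) for n >= 2.
The recursion is well-founded since F_j >= 1 for j >= 2; to make the definition
total regardless, recursion is guarded by 0 < fib (fidx n) < n (always true).\<close>
function a :: "nat \<Rightarrow> int" where
  "a n = (if n = 0 then 0 else if n = 1 then 1
          else if 0 < fib (fidx n) \<and> fib (fidx n) < n
               then int (fib (Suc (fidx n))) - a (n - fib (fidx n))
               else undefined)"
  by auto
termination
  by (relation "measure id") auto

end

theory Submission
  imports Defs
begin

text \<open>The sequence maps each Fibonacci block \<open>(F_j, F_(j+1)]\<close> into \<open>[F_j, F_(j+1))\<close>, so
  equal values only occur at indices in a common block. Inside a block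
  \<open>a(n) = F_(j+1) - a(n - F_j)\<close>, so a triple of equal values shifts down by \<open>F_j\<close> to another
  triple. By descent a triple would end with its smallest index at most 1; but the value 0 is
  taken only at 0 and the value 1 only at 1 and 2.\<close>

declare a.simps [simp del]

definition fib_block :: "nat \<Rightarrow> nat \<Rightarrow> bool" where
  "fib_block j n \<longleftrightarrow> 2 \<le> j \<and> fib j < n \<and> n \<le> fib (Suc j)"

lemma fib_block_exists:
  assumes "2 \<le> n"
  shows "\<exists>j. fib_block j n"
  using assms
proof (induction n rule: nat_induct_at_least)
  case base
  have "fib_block 2 2"
    by (simp add: fib_block_def numeral_3_eq_3)
  then show ?case ..
next
  case (Suc n)
  then obtain j where j: "fib_block j n" by blast
  show ?case
  proof (cases "Suc n \<le> fib (Suc j)")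
    case True
    with j have "fib_block j (Suc n)"
      by (simp add: fib_block_def)
    then show ?thesis ..
  next
    case False
    have "0 < fib j"
      using j by (simp add: fib_block_def fib_neq_0_nat)
    with False j have "fib_block (Suc j) (Suc n)"
      using fib_plus_2 [of j] by (simp add: fib_block_def)
    then show ?thesis ..
  qed
qed

lemma fib_block_unique:
  assumes "fib_block i n" "fib_block j n"
  shows "i = j"
proof (rule ccontr)
  assume "i \<noteq> j"
  then have "fib (Suc i) \<le> fib j \<or> fib (Suc j) \<le> fib i"
    by (metis fib_mono linorder_neqE_nat Suc_leI)
  with assms show False
    by (auto simp: fib_block_def)
qed

lemma fib_block_fidx:
  assumes "2 \<le> n"
  shows "fib_block (fidx n) n"
proof -
  have "\<exists>!j. fib_block j n"
    using fib_block_exists [OF assms] fib_block_unique by blast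
  then have "fib_block (THE j. fib_block j n) n"
    by (rule theI')
  then show ?thesis
    by (simp add: fidx_def fib_block_def)
qed

lemma fib_block_fib_pos: "fib_block j n \<Longrightarrow> 0 < fib j"
  by (simp add: fib_block_def fib_neq_0_nat)

lemma a_0 [simp]: "a 0 = 0"
  by (subst a.simps) simp

lemma a_Suc_0 [simp]: "a (Suc 0) = 1"
  by (subst a.simps) simp

lemma a_fib_block:
  assumes "fib_block j n"
  shows "a n = int (fib (Suc j)) - a (n - fib j)"
proof -
  have "2 \<le> n"
    using assms fib_block_fib_pos by (fastforce simp: fib_block_def)
  then have "fidx n = j"
    using assms fib_block_fidx fib_block_unique by blast
  with assms \<open>2 \<le> n\<close> show ?thesis
    using fib_block_fib_pos [OF assms] by (subst a.simps) (simp add: fib_block_def)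
qed

lemma a_fib_block_bounds:
  assumes "fib_block j n"
  shows "int (fib j) \<le> a n \<and> a n < int (fib (Suc j))"
  using assms
proof (induction n arbitrary: j rule: less_induct)
  case (less n)
  then obtain i where i: "j = Suc i" "1 \<le> i"
    by (cases j) (auto simp: fib_block_def)
  define m where "m = n - fib j"
  have fib_Suc_j: "fib (Suc j) = fib j + fib i"
    using fib_plus_2 [of i] i by simp
  have m: "1 \<le> m" "m \<le> fib i" "m < n"
    using less.prems fib_Suc_j fib_block_fib_pos [OF less.prems] by (auto simp: m_def fib_block_def)
  have "1 \<le> a m \<and> a m \<le> int (fib i)"
  proof (cases "m = 1")
    case True
    then show ?thesis
      using fib_neq_0_nat [of i] i by simp
  next
    case False
    then obtain k where k: "fib_block k m"
      using m fib_block_exists by fastforce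
    have "k < i"
      using k m fib_mono [of i k] by (force simp: fib_block_def)
    then have "fib (Suc k) \<le> fib i"
      by (simp add: fib_mono)
    moreover have "0 < fib k"
      using fib_block_fib_pos [OF k] .
    ultimately show ?thesis
      using less.IH [OF \<open>m < n\<close> k] by linarith
  qed
  then show ?case
    using a_fib_block [OF less.prems] fib_Suc_j by (simp add: m_def)
qed

lemma a_pos:
  assumes "0 < n"
  shows "0 < a n"
proof (cases "n = 1")
  case False
  with assms have block: "fib_block (fidx n) n"
    using fib_block_fidx by simp
  then show ?thesis
    using a_fib_block_bounds [OF block] fib_block_fib_pos [OF block] by linarith
qed simp

lemma a_eq_1_imp:
  assumes "a n = 1"
  shows "n = 1 \<or> n = 2"
proof (cases "2 \<le> n")
  case True
  then have block: "fib_block (fidx n) n"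
    by (rule fib_block_fidx)
  have "fidx n < 3"
  proof (rule ccontr)
    assume "\<not> fidx n < 3"
    then have "fib 3 \<le> fib (fidx n)"
      by (simp add: fib_mono)
    then show False
      using a_fib_block_bounds [OF block] assms by (simp add: numeral_3_eq_3)
  qed
  with block have "fidx n = 2"
    by (simp add: fib_block_def)
  with block show ?thesis
    by (simp add: fib_block_def numeral_3_eq_3)
next
  case False
  with assms show ?thesis
    by (cases n) auto
qed

lemma a_eq_imp_same_fib_block:
  assumes "fib_block i x" "fib_block j y" "a x = a y"
  shows "i = j"
proof (rule ccontr)
  assume "i \<noteq> j"
  then have "fib (Suc i) \<le> fib j \<or> fib (Suc j) \<le> fib i"
    by (metis fib_mono linorder_neqE_nat Suc_leI)
  with a_fib_block_bounds [OF assms(1)] a_fib_block_bounds [OF assms(2)] assms(3)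
  show False
    by linarith
qed

lemma a_no_three_equal:
  assumes "x < y" "y < z" "a x = a y" "a y = a z"
  shows False
  using assms
proof (induction z arbitrary: x y rule: less_induct)
  case (less z)
  consider "x = 0" | "x = 1" | "2 \<le> x"
    by linarith
  then show False
  proof cases
    case 1
    then show False
      using less.prems a_pos [of y] by simp
  next
    case 2
    then have "a y = 1" "a z = 1"
      using less.prems by simp_all
    then have "y = 2" "z = 2"
      using a_eq_1_imp 2 less.prems by fastforce+
    with less.prems show False
      by simp
  next
    case 3
    define j where "j = fidx x"
    have x: "fib_block j x"
      using fib_block_fidx [OF 3] by (simp add: j_def)
    have y: "fib_block j y" and z: "fib_block j z"
      using less.prems 3 fib_block_fidx a_eq_imp_same_fib_block [OF x]
      by (metis less_imp_le_nat order.trans)+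
    have "x - fib j < y - fib j" "y - fib j < z - fib j" "z - fib j < z"
      using less.prems x fib_block_fib_pos [OF x] by (auto simp: fib_block_def)
    moreover have "a (x - fib j) = a (y - fib j)" "a (y - fib j) = a (z - fib j)"
      using less.prems a_fib_block [OF x] a_fib_block [OF y] a_fib_block [OF z] by simp_all
    ultimately show False
      using less.IH by blast
  qed
qed

theorem proposition1:
  shows "\<not> (\<exists>x y z :: nat. x < y \<and> y < z \<and> a x = a y \<and> a y = a z)"
  using a_no_three_equal by blast

end
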